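(* Let $(A,\leq,\cdot,/)$ be a narhoop. Then for all $x,y,z\in A$: (N1) $(x\sqcap y)\sqcap x = x\sqcap y$; (N2) $x\leq xy/y$; (N3) $(x\sqcap y)z\leq xz$; (N4) $(x\sqcap y)/z\leq x/z$. Conversely, let $(A,\cdot,/)$ be any algebra with two binary operations satisfying the following identities, which are (N1)–(N4) with each inequality $u\le v$ written as the equation $u=v\sqcap u$: (N1) $(x\sqcap y)\sqcap x = x\sqcap y$; (N2) $x=(xy/y)\sqcap x$; (N3) $(x\sqcap y)z = xz\sqcap (x\sqcap y)z$; (N4) $(x\sqcap y)/z = (x/z)\sqcap ((x\sqcap y)/z)$. Define a relation $\leq$ on $A$ by $x\leq y$ iff $x=y\sqcap x$. Then $A$ satisfies the identities $x\sqcap (xy/y)=x$, $(x\sqcap y)/y = x/y$ and $(x\sqcap y)\sqcap y=x\sqcap y$, the relation $\leq$ is a partial order, and $(A,\leq,\cdot,/)$ is a narhoop. In particular, narhoops form a variety defined by the identities (N1)–(N4).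
   Context: For a set $A$ with binary operations $\cdot$ and $/$, write $xy$ for $x\cdot y$; the convention is that $\cdot$ binds more strongly than $/$, and $/$ binds more strongly than $\sqcap$, where $x\sqcap y := (x/y)y$. A right-residuated magma is a structure $(A,\leq,\cdot,/)$ where $(A,\leq)$ is a poset and $xy\leq z \iff x\leq z/y$ for all $x,y,z\in A$. Condition (N) on such a structure: for all $x,y$, $x\leq y \iff x=y\sqcap x$. A narhoop (nonassociative right hoop) is a right-residuated magma such that for all $x,y$: $x\leq y \iff x\sqcap y = x = y\sqcap x$ (equivalently, a right-residuated magma satisfying (N) and the identity $(x\sqcap y)\sqcap x=x\sqcap y$). *)

theory Defs
  imports Main
begin

definition rmeet :: "('a \<Rightarrow> 'a \<Rightarrow> 'a) \<Rightarrow> ('a \<Rightarrow> 'a \<Rightarrow> 'a) \<Rightarrow> 'a \<Rightarrow> 'a \<Rightarrow> 'a" where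
  "rmeet m d x y = m (d x y) y"

definition poset_rel :: "('a \<Rightarrow> 'a \<Rightarrow> bool) \<Rightarrow> bool" where
  "poset_rel le \<longleftrightarrow> reflp le \<and> antisymp le \<and> transp le"

definition right_residuated_magma ::
  "('a \<Rightarrow> 'a \<Rightarrow> bool) \<Rightarrow> ('a \<Rightarrow> 'a \<Rightarrow> 'a) \<Rightarrow> ('a \<Rightarrow> 'a \<Rightarrow> 'a) \<Rightarrow> bool" where
  "right_residuated_magma le m d \<longleftrightarrow>
     poset_rel le \<and> (\<forall>x y z. le (m x y) z \<longleftrightarrow> le x (d z y))"

definition narhoop ::
  "('a \<Rightarrow> 'a \<Rightarrow> bool) \<Rightarrow> ('a \<Rightarrow> 'a \<Rightarrow> 'a) \<Rightarrow> ('a \<Rightarrow> 'a \<Rightarrow> 'a) \<Rightarrow> bool" where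
  "narhoop le m d \<longleftrightarrow> right_residuated_magma le m d \<and>
     (\<forall>x y. le x y \<longleftrightarrow> (rmeet m d x y = x \<and> rmeet m d y x = x))"

end

theory Submission
  imports Defs
begin

text \<open>
  In a right-residuated magma, \<open>x \<mapsto> x y\<close> and \<open>z \<mapsto> z / y\<close> form a Galois connection, so
  both maps are monotone, \<open>x \<le> x y / y\<close> and \<open>x \<sqinter> y = (x / y) y \<le> x\<close>; this gives
  (N2)--(N4), and (N1) is the condition (N) applied to \<open>x \<sqinter> y \<le> x\<close>.
  Conversely, (N3) and (N4) say that multiplication and division by \<open>z\<close> are monotone for
  \<open>x \<le> y \<longleftrightarrow> x = y \<sqinter> x\<close>, and (N2) is the unit of the Galois connection. The key derived
  identity is \<open>(x \<sqinter> y) / y = x / y\<close>, which makes \<open>\<sqinter> y\<close> idempotent; with it one obtains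
  transitivity and the counit \<open>x \<sqinter> y \<le> x\<close>, hence residuation, while (N1) yields
  reflexivity, antisymmetry and condition (N).
\<close>

lemma right_residuated_magmaD:
  assumes "right_residuated_magma le m d"
  shows "le x x" "le x y \<Longrightarrow> le y z \<Longrightarrow> le x z" "le (m x y) z \<longleftrightarrow> le x (d z y)"
  using assms unfolding right_residuated_magma_def poset_rel_def
  by (auto simp: reflp_def dest: transpD)

context
  fixes le :: "'a \<Rightarrow> 'a \<Rightarrow> bool" and m d :: "'a \<Rightarrow> 'a \<Rightarrow> 'a"
  assumes rrm: "right_residuated_magma le m d"
begin

lemma rrm_unit: "le x (d (m x y) y)"
  using right_residuated_magmaD[OF rrm] by blast

lemma rrm_counit: "le (rmeet m d x y) x"
  unfolding rmeet_def using right_residuated_magmaD[OF rrm] by blast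

lemma rrm_mult_mono: "le x x' \<Longrightarrow> le (m x z) (m x' z)"
  using rrm_unit right_residuated_magmaD[OF rrm] by blast

lemma rrm_div_mono: "le x x' \<Longrightarrow> le (d x z) (d x' z)"
  using rrm_counit[unfolded rmeet_def] right_residuated_magmaD[OF rrm] by blast

end

lemma narhoop_right_residuated_magma: "narhoop le m d \<Longrightarrow> right_residuated_magma le m d"
  by (simp add: narhoop_def)

lemma narhoop_rmeet_absorb:
  assumes "narhoop le m d"
  shows "rmeet m d (rmeet m d x y) x = rmeet m d x y"
  using assms rrm_counit[OF narhoop_right_residuated_magma[OF assms]]
  unfolding narhoop_def by blast

locale narhoop_identities =
  fixes m d :: "'a \<Rightarrow> 'a \<Rightarrow> 'a"
  assumes rmeet_absorb: "rmeet m d (rmeet m d x y) x = rmeet m d x y"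
    and unit_identity: "x = rmeet m d (d (m x y) y) x"
    and mult_rmeet_identity: "m (rmeet m d x y) z = rmeet m d (m x z) (m (rmeet m d x y) z)"
    and div_rmeet_identity: "d (rmeet m d x y) z = rmeet m d (d x z) (d (rmeet m d x y) z)"
begin

abbreviation leq :: "'a \<Rightarrow> 'a \<Rightarrow> bool" where
  "leq x y \<equiv> x = rmeet m d y x"

text \<open>
  A fact \<open>leq x y\<close> is the equation \<open>x = rmeet m d y x\<close>, which loops as a rewrite rule;
  the proofs below only rewrite with its symmetric form.
\<close>

lemma leq_imp_rmeet_eq:
  assumes "leq x y"
  shows "rmeet m d x y = x"
  using rmeet_absorb[of y x] unfolding assms[symmetric] .

lemma leq_antisym:
  assumes "leq x y" "leq y x"
  shows "x = y"
  using assms(2) unfolding leq_imp_rmeet_eq[OF assms(1)] by (rule sym)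

lemma rmeet_unit: "rmeet m d x (d (m x y) y) = x"
  by (rule leq_imp_rmeet_eq[OF unit_identity])

lemma leq_refl: "leq x x"
  using rmeet_absorb[of x "d (m x x) x"] by (simp add: rmeet_unit)

lemma mult_leq_mono:
  assumes "leq x y"
  shows "leq (m x z) (m y z)"
  using mult_rmeet_identity[of y x z] unfolding assms[symmetric] .

lemma div_leq_mono:
  assumes "leq x y"
  shows "leq (d x z) (d y z)"
  using div_rmeet_identity[of y x z] unfolding assms[symmetric] .

lemma rmeet_leq_mono: "leq x y \<Longrightarrow> leq (rmeet m d x z) (rmeet m d y z)"
  unfolding rmeet_def[of m d x z] rmeet_def[of m d y z] by (rule mult_leq_mono[OF div_leq_mono])

lemma div_rmeet: "d (rmeet m d x y) y = d x y"
proof (rule leq_antisym)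
  show "leq (d (rmeet m d x y) y) (d x y)"
    by (rule div_rmeet_identity)
  show "leq (d x y) (d (rmeet m d x y) y)"
    using unit_identity[of "d x y" y] unfolding rmeet_def[of m d x y, symmetric] .
qed

lemma rmeet_idem_right: "rmeet m d (rmeet m d x y) y = rmeet m d x y"
  unfolding rmeet_def[of m d "rmeet m d x y"] div_rmeet by (simp only: rmeet_def)

lemma leq_rmeet_imp_leq: "leq x (rmeet m d z x) \<Longrightarrow> leq x z"
  by (simp only: rmeet_idem_right)

lemma leq_trans:
  assumes "leq x y" "leq y z"
  shows "leq x z"
proof -
  have "leq (rmeet m d y x) (rmeet m d z x)"
    using rmeet_leq_mono[OF assms(2)] .
  then have "leq x (rmeet m d z x)"
    by (simp only: assms(1)[symmetric])
  then show ?thesis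
    by (rule leq_rmeet_imp_leq)
qed

text \<open>
  (N4) with divisor \<open>x \<sqinter> y\<close>, multiplied by \<open>x \<sqinter> y\<close>, gives
  \<open>x \<sqinter> y = (x \<sqinter> y) \<sqinter> (x \<sqinter> y) \<le> x \<sqinter> (x \<sqinter> y)\<close>.
\<close>
lemma rmeet_counit: "leq (rmeet m d x y) x"
proof -
  let ?a = "rmeet m d x y"
  have "leq (m (d ?a ?a) ?a) (m (d x ?a) ?a)"
    using mult_leq_mono[OF div_rmeet_identity] .
  then have "leq ?a (rmeet m d x ?a)"
    by (simp only: rmeet_def[symmetric] leq_refl[of ?a, symmetric])
  then show ?thesis
    by (rule leq_rmeet_imp_leq)
qed

lemma residuation: "leq (m x y) z \<longleftrightarrow> leq x (d z y)"
proof
  assume "leq (m x y) z"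
  then show "leq x (d z y)"
    by (rule leq_trans[OF unit_identity div_leq_mono])
next
  assume "leq x (d z y)"
  then have "leq (m x y) (rmeet m d z y)"
    unfolding rmeet_def[of m d z y] by (rule mult_leq_mono)
  then show "leq (m x y) z"
    using rmeet_counit by (rule leq_trans)
qed

lemma poset_leq: "poset_rel leq"
  unfolding poset_rel_def
proof (intro conjI)
  show "reflp leq"
    by (rule reflpI) (rule leq_refl)
  show "antisymp leq"
    by (rule antisympI) (rule leq_antisym)
  show "transp leq"
    by (rule transpI) (rule leq_trans)
qed

lemma narhoop_leq: "narhoop leq m d"
  unfolding narhoop_def right_residuated_magma_def
proof (intro conjI allI poset_leq)
  fix x y z
  show "leq (m x y) z \<longleftrightarrow> leq x (d z y)"
    by (rule residuation)
next
  fix x y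
  show "leq x y \<longleftrightarrow> rmeet m d x y = x \<and> rmeet m d y x = x"
  proof
    assume le: "leq x y"
    show "rmeet m d x y = x \<and> rmeet m d y x = x"
      using leq_imp_rmeet_eq[OF le] le[symmetric] by (rule conjI)
  qed simp
qed

end

theorem mainTheorem1:
  shows "(\<forall>(le :: 'a \<Rightarrow> 'a \<Rightarrow> bool) m d. narhoop le m d \<longrightarrow>
            (\<forall>x y z.
               rmeet m d (rmeet m d x y) x = rmeet m d x y \<and>
               le x (d (m x y) y) \<and>
               le (m (rmeet m d x y) z) (m x z) \<and>
               le (d (rmeet m d x y) z) (d x z)))
       \<and>
         (\<forall>(m :: 'a \<Rightarrow> 'a \<Rightarrow> 'a) d.
            (\<forall>x y z.
               rmeet m d (rmeet m d x y) x = rmeet m d x y \<and>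
               x = rmeet m d (d (m x y) y) x \<and>
               m (rmeet m d x y) z = rmeet m d (m x z) (m (rmeet m d x y) z) \<and>
               d (rmeet m d x y) z = rmeet m d (d x z) (d (rmeet m d x y) z))
            \<longrightarrow> (let le = (\<lambda>x y. x = rmeet m d y x) in
                  (\<forall>x y. rmeet m d x (d (m x y) y) = x) \<and>
                  (\<forall>x y. d (rmeet m d x y) y = d x y) \<and>
                  (\<forall>x y. rmeet m d (rmeet m d x y) y = rmeet m d x y) \<and>
                  poset_rel le \<and>
                  narhoop le m d))"
proof (intro conjI allI impI)
  fix le :: "'a \<Rightarrow> 'a \<Rightarrow> bool" and m d x y z
  assume hoop: "narhoop le m d"
  note rrm = narhoop_right_residuated_magma[OF hoop]
  show "rmeet m d (rmeet m d x y) x = rmeet m d x y"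
    using narhoop_rmeet_absorb[OF hoop] .
  show "le x (d (m x y) y)"
    using rrm_unit[OF rrm] .
  show "le (m (rmeet m d x y) z) (m x z)"
    using rrm_mult_mono[OF rrm rrm_counit[OF rrm]] .
  show "le (d (rmeet m d x y) z) (d x z)"
    using rrm_div_mono[OF rrm rrm_counit[OF rrm]] .
next
  fix m d :: "'a \<Rightarrow> 'a \<Rightarrow> 'a"
  assume "\<forall>x y z.
            rmeet m d (rmeet m d x y) x = rmeet m d x y \<and>
            x = rmeet m d (d (m x y) y) x \<and>
            m (rmeet m d x y) z = rmeet m d (m x z) (m (rmeet m d x y) z) \<and>
            d (rmeet m d x y) z = rmeet m d (d x z) (d (rmeet m d x y) z)"
  then interpret narhoop_identities m d
    by unfold_locales blast+
  show "let le = (\<lambda>x y. x = rmeet m d y x) in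
          (\<forall>x y. rmeet m d x (d (m x y) y) = x) \<and>
          (\<forall>x y. d (rmeet m d x y) y = d x y) \<and>
          (\<forall>x y. rmeet m d (rmeet m d x y) y = rmeet m d x y) \<and>
          poset_rel le \<and>
          narhoop le m d"
    unfolding Let_def
    by (intro conjI allI rmeet_unit div_rmeet rmeet_idem_right poset_leq narhoop_leq)
qed

end
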